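(* Let $N,n,q\ge1$, let $A\in\mathbb{R}^{n\times n}$, $B_v\in\mathbb{R}^{n\times q}$, $G\in\mathbb{R}^{q\times n}$, $B_u\in\mathbb{R}^{n\times 1}$, $C\in\mathbb{R}^{1\times n}$ and $M\in\mathbb{R}^{N\times N}$, and suppose $K:=(I_N\otimes A)+M\otimes(B_vG)$ is invertible. Define the linear map $L:\mathbb{R}^N\to\mathbb{R}^N$ by $$L\tilde u=-(I_N\otimes C)\,K^{-1}\,(I_N\otimes B_u)\,\tilde u$$ (the steady-state input-to-readout map of the linear system $\dot{\tilde x}=K\tilde x+(I_N\otimes B_u)\tilde u$, $\tilde y=(I_N\otimes C)\tilde x$). If $\Pi\in\mathbb{R}^{N\times N}$ is invertible and $\Pi M=M\Pi$, then $L\Pi=\Pi L$, i.e. for every $\tilde u\in\mathbb{R}^N$, $L(\Pi\tilde u)=\Pi(L\tilde u)$.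
   Context: $\otimes$ denotes the Kronecker product and $I_m$ the $m\times m$ identity matrix. In the paper's setting, this describes a network of $N$ identical cells linearized about a homogeneous steady state, with $M$ the interconnection matrix. *)

theory Defs
  imports "Jordan_Normal_Form.Gauss_Jordan_Elimination"
begin

definition kron_mat :: "'a :: times mat \<Rightarrow> 'a mat \<Rightarrow> 'a mat" where
  "kron_mat P Q = mat (dim_row P * dim_row Q) (dim_col P * dim_col Q)
     (\<lambda>(i, j). P $$ (i div dim_row Q, j div dim_col Q) * Q $$ (i mod dim_row Q, j mod dim_col Q))"

definition inv_mat :: "'a :: field mat \<Rightarrow> 'a mat" where
  "inv_mat K = the (mat_inverse K)"

definition net_K :: "nat \<Rightarrow> real mat \<Rightarrow> real mat \<Rightarrow> real mat \<Rightarrow> real mat \<Rightarrow> real mat" where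
  "net_K N A Bv G M = kron_mat (1\<^sub>m N) A + kron_mat M (Bv * G)"

definition steady_map :: "nat \<Rightarrow> real mat \<Rightarrow> real mat \<Rightarrow> real mat \<Rightarrow> real mat \<Rightarrow> real mat
    \<Rightarrow> real mat \<Rightarrow> real vec \<Rightarrow> real vec" where
  "steady_map N A Bv G Bu C M u =
     - ((kron_mat (1\<^sub>m N) C * inv_mat (net_K N A Bv G M) * kron_mat (1\<^sub>m N) Bu) *\<^sub>v u)"

end

theory Submission
  imports Defs
begin

text \<open>Write \<open>P = \<Pi> \<otimes> I\<^sub>n\<close>. By the mixed-product rule for Kronecker products, \<open>P\<close> commutes
  with \<open>I\<^sub>N \<otimes> A\<close> and, since \<open>\<Pi>M = M\<Pi>\<close>, with \<open>M \<otimes> (B\<^sub>vG)\<close>; hence with \<open>K\<close> and therefore with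
  \<open>K\<^sup>-\<^sup>1\<close>. Moreover \<open>(I\<^sub>N \<otimes> B\<^sub>u)\<Pi> = P(I\<^sub>N \<otimes> B\<^sub>u)\<close> and \<open>(I\<^sub>N \<otimes> C)P = \<Pi>(I\<^sub>N \<otimes> C)\<close>, both sides
  being \<open>\<Pi> \<otimes> B\<^sub>u\<close> resp. \<open>\<Pi> \<otimes> C\<close>. Pushing \<open>\<Pi>\<close> through the product
  \<open>(I\<^sub>N \<otimes> C) K\<^sup>-\<^sup>1 (I\<^sub>N \<otimes> B\<^sub>u)\<close> from right to left gives the claim.\<close>

lemma sum_lessThan_mult:
  fixes f :: "nat \<Rightarrow> 'a::comm_monoid_add"
  shows "(\<Sum>k<b * d. f k) = (\<Sum>x<b. \<Sum>y<d. f (x * d + y))"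
proof -
  have "(\<Sum>k\<in>{x * d..<x * d + d}. f k) = (\<Sum>y<d. f (x * d + y))" for x
    using sum.shift_bounds_nat_ivl[of f 0 "x * d" d]
    by (simp add: lessThan_atLeast0 add.commute)
  then show ?thesis
    by (simp flip: sum.nat_group)
qed

lemma kron_mat_carrier:
  "P \<in> carrier_mat a b \<Longrightarrow> Q \<in> carrier_mat c d \<Longrightarrow> kron_mat P Q \<in> carrier_mat (a * c) (b * d)"
  unfolding kron_mat_def by auto

lemma kron_mat_index:
  "P \<in> carrier_mat a b \<Longrightarrow> Q \<in> carrier_mat c d \<Longrightarrow> i < a * c \<Longrightarrow> j < b * d \<Longrightarrow>
    kron_mat P Q $$ (i, j) = P $$ (i div c, j div d) * Q $$ (i mod c, j mod d)"
  unfolding kron_mat_def by auto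

lemma kron_mat_one_right:
  "(P :: 'a::semiring_1 mat) \<in> carrier_mat a b \<Longrightarrow> kron_mat P (1\<^sub>m 1) = P"
  by (rule eq_matI) (auto simp: kron_mat_def)

lemma kron_mat_mult_index:
  fixes P :: "'a::comm_semiring_0 mat"
  assumes P: "P \<in> carrier_mat a b" and Q: "Q \<in> carrier_mat c d"
    and R: "R \<in> carrier_mat b e" and S: "S \<in> carrier_mat d f"
    and i: "i < a * c" and j: "j < e * f"
  shows "(kron_mat P Q * kron_mat R S) $$ (i, j)
    = (\<Sum>x<b. \<Sum>y<d. (P $$ (i div c, x) * R $$ (x, j div f)) * (Q $$ (i mod c, y) * S $$ (y, j mod f)))"
proof -
  have "(kron_mat P Q * kron_mat R S) $$ (i, j)
      = (\<Sum>k<b * d. kron_mat P Q $$ (i, k) * kron_mat R S $$ (k, j))"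
    using kron_mat_carrier[OF P Q] kron_mat_carrier[OF R S] i j
    by (auto simp: scalar_prod_def lessThan_atLeast0 intro!: sum.cong)
  also have "\<dots> = (\<Sum>x<b. \<Sum>y<d. kron_mat P Q $$ (i, x * d + y) * kron_mat R S $$ (x * d + y, j))"
    by (rule sum_lessThan_mult)
  also have "\<dots> = (\<Sum>x<b. \<Sum>y<d. (P $$ (i div c, x) * R $$ (x, j div f))
                                   * (Q $$ (i mod c, y) * S $$ (y, j mod f)))"
  proof (intro sum.cong refl)
    fix x y
    assume x: "x \<in> {..<b}" and y: "y \<in> {..<d}"
    have "x * d + y < Suc x * d"
      using y by simp
    also have "\<dots> \<le> b * d"
      using x by (intro mult_le_mono1) simp
    finally have k: "x * d + y < b * d" .
    have "(x * d + y) div d = x" "(x * d + y) mod d = y"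
      using y by auto
    then show "kron_mat P Q $$ (i, x * d + y) * kron_mat R S $$ (x * d + y, j)
        = (P $$ (i div c, x) * R $$ (x, j div f)) * (Q $$ (i mod c, y) * S $$ (y, j mod f))"
      using kron_mat_index[OF P Q i k] kron_mat_index[OF R S k j] by (simp add: ac_simps)
  qed
  finally show ?thesis .
qed

lemma kron_mat_mult:
  fixes P :: "'a::comm_semiring_0 mat"
  assumes P: "P \<in> carrier_mat a b" and Q: "Q \<in> carrier_mat c d"
    and R: "R \<in> carrier_mat b e" and S: "S \<in> carrier_mat d f"
  shows "kron_mat P Q * kron_mat R S = kron_mat (P * R) (Q * S)"
proof (rule eq_matI)
  have PR: "P * R \<in> carrier_mat a e" and QS: "Q * S \<in> carrier_mat c f"
    using P Q R S by auto
  note carriers = kron_mat_carrier[OF P Q] kron_mat_carrier[OF R S] kron_mat_carrier[OF PR QS]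
  show "dim_row (kron_mat P Q * kron_mat R S) = dim_row (kron_mat (P * R) (Q * S))"
    "dim_col (kron_mat P Q * kron_mat R S) = dim_col (kron_mat (P * R) (Q * S))"
    using carriers by auto
  fix i j
  assume "i < dim_row (kron_mat (P * R) (Q * S))" "j < dim_col (kron_mat (P * R) (Q * S))"
  then have i: "i < a * c" and j: "j < e * f"
    using carriers by auto
  then have "0 < c" "0 < f"
    by (auto intro: gr0I)
  then have "i div c < a" "i mod c < c" "j div f < e" "j mod f < f"
    using i j by (auto simp: less_mult_imp_div_less)
  then have "(\<Sum>x<b. \<Sum>y<d. (P $$ (i div c, x) * R $$ (x, j div f)) * (Q $$ (i mod c, y) * S $$ (y, j mod f)))
      = (P * R) $$ (i div c, j div f) * (Q * S) $$ (i mod c, j mod f)"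
    using P Q R S by (simp add: sum_product[symmetric] scalar_prod_def lessThan_atLeast0)
  then show "(kron_mat P Q * kron_mat R S) $$ (i, j) = kron_mat (P * R) (Q * S) $$ (i, j)"
    using kron_mat_mult_index[OF P Q R S i j] kron_mat_index[OF PR QS i j] by simp
qed

lemma kron_mat_one_left_mult_one_right:
  fixes P :: "'a::comm_semiring_1 mat"
  assumes "P \<in> carrier_mat a b" and "Q \<in> carrier_mat c d"
  shows "kron_mat (1\<^sub>m a) Q * kron_mat P (1\<^sub>m d) = kron_mat P Q"
  using kron_mat_mult[of "1\<^sub>m a" a a Q c d P b "1\<^sub>m d" d] assms by simp

lemma kron_mat_one_right_mult_one_left:
  fixes P :: "'a::comm_semiring_1 mat"
  assumes "P \<in> carrier_mat a b" and "Q \<in> carrier_mat c d"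
  shows "kron_mat P (1\<^sub>m c) * kron_mat (1\<^sub>m b) Q = kron_mat P Q"
  using kron_mat_mult[of P a b "1\<^sub>m c" c c "1\<^sub>m b" b Q d] assms by simp

lemma kron_mat_one_right_commute:
  fixes P :: "'a::comm_semiring_1 mat"
  assumes P: "P \<in> carrier_mat a a" and R: "R \<in> carrier_mat a a" and S: "S \<in> carrier_mat c c"
    and PR: "P * R = R * P"
  shows "kron_mat P (1\<^sub>m c) * kron_mat R S = kron_mat R S * kron_mat P (1\<^sub>m c)"
  using kron_mat_mult[OF P one_carrier_mat R S] kron_mat_mult[OF R S P one_carrier_mat] P R S PR
  by simp

lemma inv_mat:
  fixes K :: "'a::field mat"
  assumes K: "K \<in> carrier_mat k k" and "invertible_mat K"
  shows "K * inv_mat K = 1\<^sub>m k" "inv_mat K * K = 1\<^sub>m k" "inv_mat K \<in> carrier_mat k k"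
proof -
  obtain B where "inverts_mat K B" "inverts_mat B K"
    using \<open>invertible_mat K\<close> unfolding invertible_mat_def by blast
  then have KB: "K * B = 1\<^sub>m k" and BK: "B * K = 1\<^sub>m (dim_row B)"
    using K unfolding inverts_mat_def by auto
  have "dim_row B = k"
    using arg_cong[OF BK, of dim_col] K by simp
  moreover have "dim_col B = k"
    using arg_cong[OF KB, of dim_col] by simp
  ultimately have "K \<in> Units (ring_mat TYPE('a) k ())"
    unfolding Units_def ring_mat_simps using K KB BK by auto
  then obtain Ki where "mat_inverse K = Some Ki"
    using mat_inverse(1)[OF K, of "()"] by fastforce
  then show "K * inv_mat K = 1\<^sub>m k" "inv_mat K * K = 1\<^sub>m k" "inv_mat K \<in> carrier_mat k k"
    using mat_inverse(2)[OF K] unfolding inv_mat_def by auto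
qed

lemma mult_mat_intertwine:
  assumes A: "A \<in> carrier_mat a b" and B: "B \<in> carrier_mat b c"
    and P: "P \<in> carrier_mat c c" and Q: "Q \<in> carrier_mat b b" and R: "R \<in> carrier_mat a a"
    and BP: "B * P = Q * B" and AQ: "A * Q = R * A"
  shows "A * B * P = R * (A * B)"
proof -
  have "A * B * P = A * (Q * B)"
    by (simp only: assoc_mult_mat[OF A B P] BP)
  also have "\<dots> = R * A * B"
    by (simp only: assoc_mult_mat[OF A Q B, symmetric] AQ)
  also have "\<dots> = R * (A * B)"
    by (rule assoc_mult_mat[OF R A B])
  finally show ?thesis .
qed

lemma commute_inverse_mat:
  fixes K :: "'a::semiring_1 mat"
  assumes P: "P \<in> carrier_mat k k" and K: "K \<in> carrier_mat k k" and Ki: "Ki \<in> carrier_mat k k"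
    and KKi: "K * Ki = 1\<^sub>m k" and KiK: "Ki * K = 1\<^sub>m k" and PK: "P * K = K * P"
  shows "Ki * P = P * Ki"
proof -
  have "Ki * P = Ki * P * (K * Ki)"
    using Ki P by (simp add: KKi)
  also have "\<dots> = Ki * (P * K) * Ki"
    by (simp only: assoc_mult_mat[OF mult_carrier_mat[OF Ki P] K Ki, symmetric] assoc_mult_mat[OF Ki P K])
  also have "\<dots> = Ki * K * P * Ki"
    by (simp only: PK assoc_mult_mat[OF Ki K P])
  also have "\<dots> = P * Ki"
    using P Ki by (simp add: KiK)
  finally show ?thesis .
qed

lemma net_K_carrier:
  assumes "A \<in> carrier_mat n n" and "Bv \<in> carrier_mat n q" and "G \<in> carrier_mat q n"
    and "M \<in> carrier_mat N N"
  shows "net_K N A Bv G M \<in> carrier_mat (N * n) (N * n)"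
  unfolding net_K_def using assms
  by (intro add_carrier_mat kron_mat_carrier) auto

lemma net_K_commute:
  fixes Pi :: "real mat"
  assumes A: "A \<in> carrier_mat n n" and Bv: "Bv \<in> carrier_mat n q" and G: "G \<in> carrier_mat q n"
    and M: "M \<in> carrier_mat N N" and Pi: "Pi \<in> carrier_mat N N" and PiM: "Pi * M = M * Pi"
  shows "kron_mat Pi (1\<^sub>m n) * net_K N A Bv G M = net_K N A Bv G M * kron_mat Pi (1\<^sub>m n)"
proof -
  have BG: "Bv * G \<in> carrier_mat n n"
    using Bv G by simp
  have P: "kron_mat Pi (1\<^sub>m n) \<in> carrier_mat (N * n) (N * n)"
    and K1: "kron_mat (1\<^sub>m N) A \<in> carrier_mat (N * n) (N * n)"
    and K2: "kron_mat M (Bv * G) \<in> carrier_mat (N * n) (N * n)"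
    using kron_mat_carrier[OF Pi one_carrier_mat] kron_mat_carrier[OF one_carrier_mat A]
      kron_mat_carrier[OF M BG] by auto
  have "kron_mat Pi (1\<^sub>m n) * kron_mat (1\<^sub>m N) A = kron_mat (1\<^sub>m N) A * kron_mat Pi (1\<^sub>m n)"
    using Pi A by (intro kron_mat_one_right_commute) auto
  moreover have "kron_mat Pi (1\<^sub>m n) * kron_mat M (Bv * G) = kron_mat M (Bv * G) * kron_mat Pi (1\<^sub>m n)"
    using Pi M BG PiM by (rule kron_mat_one_right_commute)
  ultimately show ?thesis
    unfolding net_K_def mult_add_distrib_mat[OF P K1 K2] add_mult_distrib_mat[OF K1 K2 P]
    by (simp only:)
qed

lemma mult_mat_vec_uminus:
  "(A :: 'a::ring mat) \<in> carrier_mat nr nc \<Longrightarrow> v \<in> carrier_vec nc \<Longrightarrow> A *\<^sub>v (- v) = - (A *\<^sub>v v)"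
  by (intro eq_vecI) (auto simp: scalar_prod_def sum_negf)

definition steady_gain :: "nat \<Rightarrow> real mat \<Rightarrow> real mat \<Rightarrow> real mat \<Rightarrow> real mat \<Rightarrow> real mat
    \<Rightarrow> real mat \<Rightarrow> real mat" where
  "steady_gain N A Bv G Bu C M =
     kron_mat (1\<^sub>m N) C * inv_mat (net_K N A Bv G M) * kron_mat (1\<^sub>m N) Bu"

lemma steady_map_eq: "steady_map N A Bv G Bu C M u = - (steady_gain N A Bv G Bu C M *\<^sub>v u)"
  unfolding steady_map_def steady_gain_def ..

lemma steady_gain_carrier:
  assumes "A \<in> carrier_mat n n" and "Bv \<in> carrier_mat n q" and "G \<in> carrier_mat q n"
    and "Bu \<in> carrier_mat n 1" and "C \<in> carrier_mat 1 n" and "M \<in> carrier_mat N N"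
    and "invertible_mat (net_K N A Bv G M)"
  shows "steady_gain N A Bv G Bu C M \<in> carrier_mat N N"
proof -
  have "kron_mat (1\<^sub>m N) C \<in> carrier_mat N (N * n)" "kron_mat (1\<^sub>m N) Bu \<in> carrier_mat (N * n) N"
    using kron_mat_carrier[OF one_carrier_mat assms(5)] kron_mat_carrier[OF one_carrier_mat assms(4)]
    by simp_all
  then show ?thesis
    using inv_mat(3)[OF net_K_carrier[OF assms(1-3,6)] assms(7)]
    unfolding steady_gain_def by (intro mult_carrier_mat)
qed

lemma steady_gain_commute:
  fixes Pi :: "real mat"
  assumes A: "A \<in> carrier_mat n n" and Bv: "Bv \<in> carrier_mat n q" and G: "G \<in> carrier_mat q n"
    and Bu: "Bu \<in> carrier_mat n 1" and C: "C \<in> carrier_mat 1 n" and M: "M \<in> carrier_mat N N"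
    and inv: "invertible_mat (net_K N A Bv G M)"
    and Pi: "Pi \<in> carrier_mat N N" and PiM: "Pi * M = M * Pi"
  shows "steady_gain N A Bv G Bu C M * Pi = Pi * steady_gain N A Bv G Bu C M"
proof -
  define P where "P = kron_mat Pi (1\<^sub>m n)"
  define K where "K = net_K N A Bv G M"
  define Ki where "Ki = inv_mat K"
  define KC where "KC = kron_mat (1\<^sub>m N) C"
  define KB where "KB = kron_mat (1\<^sub>m N) Bu"
  have P: "P \<in> carrier_mat (N * n) (N * n)"
    unfolding P_def using Pi by (rule kron_mat_carrier) simp
  have K: "K \<in> carrier_mat (N * n) (N * n)"
    unfolding K_def using A Bv G M by (rule net_K_carrier)
  note Ki = inv_mat[OF K inv[folded K_def], folded Ki_def]
  have KC: "KC \<in> carrier_mat N (N * n)" and KB: "KB \<in> carrier_mat (N * n) N"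
    unfolding KC_def KB_def
    using kron_mat_carrier[OF one_carrier_mat C] kron_mat_carrier[OF one_carrier_mat Bu] by simp_all
  have KiP: "Ki * P = P * Ki"
    using commute_inverse_mat[OF P K Ki(3) Ki(1,2)] net_K_commute[OF A Bv G M Pi PiM]
    unfolding P_def K_def by simp
  have "KB * Pi = kron_mat Pi Bu"
    using kron_mat_one_left_mult_one_right[OF Pi Bu]
    unfolding KB_def kron_mat_one_right[OF Pi] .
  also have "\<dots> = P * KB"
    using kron_mat_one_right_mult_one_left[OF Pi Bu] unfolding P_def KB_def by simp
  finally have KBPi: "KB * Pi = P * KB" .
  have "KC * P = kron_mat Pi C"
    using kron_mat_one_left_mult_one_right[OF Pi C] unfolding KC_def P_def by simp
  also have "\<dots> = Pi * KC"
    using kron_mat_one_right_mult_one_left[OF Pi C]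
    unfolding KC_def kron_mat_one_right[OF Pi] by (rule sym)
  finally have PKC: "KC * P = Pi * KC" .
  have "KC * Ki * P = Pi * (KC * Ki)"
    using KC Ki(3) P P Pi KiP PKC by (rule mult_mat_intertwine)
  with mult_carrier_mat[OF KC Ki(3)] KB Pi P Pi KBPi
  have "KC * Ki * KB * Pi = Pi * (KC * Ki * KB)"
    by (rule mult_mat_intertwine)
  then show ?thesis
    unfolding steady_gain_def KC_def Ki_def K_def KB_def .
qed

theorem mainTheorem2:
  fixes N n q :: nat
    and A Bv G Bu C M Pi :: "real mat"
  assumes "N \<ge> 1" and "n \<ge> 1" and "q \<ge> 1"
    and "A \<in> carrier_mat n n" and "Bv \<in> carrier_mat n q" and "G \<in> carrier_mat q n"
    and "Bu \<in> carrier_mat n 1" and "C \<in> carrier_mat 1 n" and "M \<in> carrier_mat N N"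
    and "invertible_mat (net_K N A Bv G M)"
    and "Pi \<in> carrier_mat N N" and "invertible_mat Pi" and "Pi * M = M * Pi"
  shows "\<forall>u \<in> carrier_vec N.
           steady_map N A Bv G Bu C M (Pi *\<^sub>v u) = Pi *\<^sub>v steady_map N A Bv G Bu C M u"
proof
  fix u :: "real vec"
  assume u: "u \<in> carrier_vec N"
  let ?T = "steady_gain N A Bv G Bu C M"
  have T: "?T \<in> carrier_mat N N"
    using assms(4-10) by (rule steady_gain_carrier)
  have "?T *\<^sub>v (Pi *\<^sub>v u) = (?T * Pi) *\<^sub>v u"
    using T assms(11) u by simp
  also have "\<dots> = Pi *\<^sub>v (?T *\<^sub>v u)"
    using steady_gain_commute[OF assms(4-10) assms(11,13)] T assms(11) u by simp
  finally show "steady_map N A Bv G Bu C M (Pi *\<^sub>v u) = Pi *\<^sub>v steady_map N A Bv G Bu C M u"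
    unfolding steady_map_eq
    using mult_mat_vec_uminus[OF assms(11)] T u by simp
qed

end
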